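(* Let $Y\in\mathbb{R}^{D\times N}$ (the data matrix after subtracting the sample mean of the columns from each column), let $\hat d\in\mathbb{N}$, $\hat d\ge1$, and let $\epsilon>0$. Define $$f(L,R,\Pi)=\tfrac12\|(Y-LR')\Pi^{-1/2}\|_F^2+\tfrac D2\log|\Pi|$$ on the feasible set $\mathcal S=\mathcal S_L\times\mathcal S_R\times\mathcal S_\Pi$, where $\mathcal S_L=\mathbb{R}^{D\times\hat d}$, $\mathcal S_R=\mathbb{R}^{N\times\hat d}$, and $\mathcal S_\Pi$ is the set of $N\times N$ diagonal matrices with all diagonal entries in $[\epsilon,\infty)$, and consider the problem $\min f(L,R,\Pi)$ subject to $(L,R,\Pi)\in\mathcal S$. Initialize as follows: with $Y=\hat U\hat\Sigma\hat V'$ an SVD, set $L_0=\hat U_{1:\hat d}\hat\Sigma_{1:\hat d}^{1/2}$, $R_0=\hat V_{1:\hat d}\hat\Sigma_{1:\hat d}^{1/2}$, $\nu_0=\max\!\big(\max_j \tfrac1D\|(Y-L_0R_0')e_j\|_2^2,\ \epsilon\big)$ and $\Pi_0=\nu_0 I$. Then generate $\{(L_t,R_t,\Pi_t)\}$ by alternating minimization (block nonlinear Gauss–Seidel), each block being updated to an exact minimizer of $f$ over its feasible set with the other blocks at their most recent values: $$L_{t+1}=Y\Pi_t^{-1}R_t(R_t'\Pi_t^{-1}R_t)^{-1},\quad R_{t+1}=Y'L_{t+1}(L_{t+1}'L_{t+1})^{-1},$$ $$(\Pi_{t+1})_{jj}=\max\!\Big(\tfrac1D\|(Y-L_{t+1}R_{t+1}')e_j\|_2^2,\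 \epsilon\Big),\ j=1,\dots,N.$$ Then the limit points of the sequence $\{(L_t,R_t,\Pi_t)\}$ are critical points of this constrained problem.
   Context: $\|\cdot\|_F$ is the Frobenius norm, $|\Pi|$ the determinant, $e_j$ the $j$-th standard basis vector, $\hat U_{1:\hat d}$, $\hat V_{1:\hat d}$ the first $\hat d$ left/right singular vectors and $\hat\Sigma_{1:\hat d}$ the corresponding $\hat d\times\hat d$ diagonal matrix of largest singular values. A critical point of $\min_{w\in\mathcal S}f(w)$ (with $f$ continuously differentiable and $\mathcal S$ closed and convex) is a point $w^*\in\mathcal S$ with $\langle\nabla f(w^* ),w-w^*\rangle\ge0$ for all $w\in\mathcal S$. The matrix inverses in the updates are assumed to exist. *)

theory Defs
  imports Complex_Main "Jordan_Normal_Form.Determinant" "Jordan_Normal_Form.Gauss_Jordan_Elimination"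
begin

text \<open>Matrix inverse (used only where the inverse exists).\<close>
definition minv :: "real mat \<Rightarrow> real mat" where
  "minv A = the (mat_inverse A)"

definition colsq :: "real mat \<Rightarrow> nat \<Rightarrow> real" where
  "colsq A j = (\<Sum>i<dim_row A. (A $$ (i, j))\<^sup>2)"

definition frob :: "real mat \<Rightarrow> real" where
  "frob A = sqrt (\<Sum>i<dim_row A. \<Sum>j<dim_col A. (A $$ (i, j))\<^sup>2)"

definition is_diag :: "real mat \<Rightarrow> bool" where
  "is_diag A \<longleftrightarrow> (\<forall>i<dim_row A. \<forall>j<dim_col A. i \<noteq> j \<longrightarrow> A $$ (i, j) = 0)"

text \<open>Objective f(L,R,Pi) = 1/2 ||(Y - L R') Pi^(-1/2)||_F^2 + D/2 log |Pi|, for diagonal Pi with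
  positive diagonal; Pi^(-1/2) of such a diagonal matrix is the diagonal matrix of the entries^(-1/2).\<close>
definition fobj :: "real mat \<Rightarrow> real mat \<Rightarrow> real mat \<Rightarrow> real mat \<Rightarrow> real" where
  "fobj Y L R P =
     (1/2) * (frob ((Y - L * transpose_mat R) * mat_diag (dim_col Y) (\<lambda>j. 1 / sqrt (P $$ (j, j)))))\<^sup>2
     + (real (dim_row Y) / 2) * ln (det P)"

definition feasible :: "nat \<Rightarrow> nat \<Rightarrow> nat \<Rightarrow> real \<Rightarrow> real mat \<Rightarrow> real mat \<Rightarrow> real mat \<Rightarrow> bool" where
  "feasible D N d \<epsilon> L R P \<longleftrightarrow>
     L \<in> carrier_mat D d \<and> R \<in> carrier_mat N d \<and> P \<in> carrier_mat N N \<and> is_diag P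
     \<and> (\<forall>j<N. P $$ (j, j) \<ge> \<epsilon>)"

text \<open>The gradient is the vector of partial derivatives w.r.t. the coordinates of the variable
  (L,R,Pi); Pi ranges over the linear space of diagonal N x N matrices, whose coordinates are
  the diagonal entries.\<close>
definition critical_point :: "real mat \<Rightarrow> nat \<Rightarrow> real \<Rightarrow> real mat \<Rightarrow> real mat \<Rightarrow> real mat \<Rightarrow> bool" where
  "critical_point Y d \<epsilon> L R P \<longleftrightarrow>
     feasible (dim_row Y) (dim_col Y) d \<epsilon> L R P \<and>
     (\<exists>gL gR gP.
        (\<forall>i<dim_row Y. \<forall>k<d.
           ((\<lambda>x. fobj Y (L |\<^sub>m (i, k) \<mapsto> x) R P) has_real_derivative gL i k) (at (L $$ (i, k)))) \<and>
        (\<forall>j<dim_col Y. \<forall>k<d.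
           ((\<lambda>x. fobj Y L (R |\<^sub>m (j, k) \<mapsto> x) P) has_real_derivative gR j k) (at (R $$ (j, k)))) \<and>
        (\<forall>j<dim_col Y.
           ((\<lambda>x. fobj Y L R (P |\<^sub>m (j, j) \<mapsto> x)) has_real_derivative gP j) (at (P $$ (j, j)))) \<and>
        (\<forall>L' R' P'. feasible (dim_row Y) (dim_col Y) d \<epsilon> L' R' P' \<longrightarrow>
          0 \<le> (\<Sum>i<dim_row Y. \<Sum>k<d. gL i k * (L' $$ (i, k) - L $$ (i, k)))
             + (\<Sum>j<dim_col Y. \<Sum>k<d. gR j k * (R' $$ (j, k) - R $$ (j, k)))
             + (\<Sum>j<dim_col Y. gP j * (P' $$ (j, j) - P $$ (j, j)))))"

text \<open>Entrywise convergence of a sequence of matrices to A (finite dimensional, so equivalent to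
  convergence in any norm).\<close>
definition mat_tendsto :: "(nat \<Rightarrow> real mat) \<Rightarrow> real mat \<Rightarrow> bool" where
  "mat_tendsto X A \<longleftrightarrow> (\<forall>i<dim_row A. \<forall>j<dim_col A. (\<lambda>t. X t $$ (i, j)) \<longlonglongrightarrow> A $$ (i, j))"

definition limit_point3 ::
  "(nat \<Rightarrow> real mat) \<Rightarrow> (nat \<Rightarrow> real mat) \<Rightarrow> (nat \<Rightarrow> real mat) \<Rightarrow> real mat \<Rightarrow> real mat \<Rightarrow> real mat \<Rightarrow> bool" where
  "limit_point3 Ls Rs Ps L R P \<longleftrightarrow>
     (\<exists>\<phi>. strict_mono \<phi> \<and> mat_tendsto (Ls \<circ> \<phi>) L \<and> mat_tendsto (Rs \<circ> \<phi>) R \<and> mat_tendsto (Ps \<circ> \<phi>) P)"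

definition is_svd :: "real mat \<Rightarrow> real mat \<Rightarrow> real mat \<Rightarrow> real mat \<Rightarrow> bool" where
  "is_svd Y U S V \<longleftrightarrow>
     U \<in> carrier_mat (dim_row Y) (dim_row Y) \<and> V \<in> carrier_mat (dim_col Y) (dim_col Y) \<and>
     S \<in> carrier_mat (dim_row Y) (dim_col Y) \<and>
     transpose_mat U * U = 1\<^sub>m (dim_row Y) \<and> transpose_mat V * V = 1\<^sub>m (dim_col Y) \<and>
     is_diag S \<and> (\<forall>i < min (dim_row Y) (dim_col Y). S $$ (i, i) \<ge> 0) \<and>
     (\<forall>i j. i \<le> j \<and> j < min (dim_row Y) (dim_col Y) \<longrightarrow> S $$ (j, j) \<le> S $$ (i, i)) \<and>
     Y = U * S * transpose_mat V"

end

theory Submission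
  imports Defs
begin

text \<open>
  Every block update minimizes f exactly: the L- and R-updates solve the normal equations of a
  weighted least-squares problem, and the \<Pi>-update minimizes c / (2 x) + (D / 2) ln x over
  x \<ge> \<epsilon> column by column. Hence f decreases along the iteration and, being bounded below by
  (N D / 2) ln \<epsilon>, converges. Along a subsequence tending to a limit point, comparing with the
  values right after the next block update shows that the limit point minimizes f in each block
  separately. Blockwise minimality makes the partial derivatives in L and R vanish and forces the
  partial derivative in a diagonal entry of \<Pi> to vanish in the interior and to be nonnegative at
  the bound \<epsilon>, which together give the critical-point inequality.
\<close>

lemma invertible_mat_minv:
  assumes A: "A \<in> carrier_mat n n" and inv: "invertible_mat A"
  shows "A * minv A = 1\<^sub>m n" and "minv A * A = 1\<^sub>m n" and "minv A \<in> carrier_mat n n"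
proof -
  from inv obtain B where AB: "A * B = 1\<^sub>m (dim_row A)" and BA: "B * A = 1\<^sub>m (dim_row B)"
    unfolding invertible_mat_def inverts_mat_def by auto
  have "B \<in> carrier_mat n n"
    using A AB BA by (metis carrier_matD carrier_matI index_mult_mat(2,3) index_one_mat(2,3))
  with A AB BA have "A \<in> Units (ring_mat TYPE(real) n ())"
    unfolding Units_def ring_mat_def by auto
  then obtain C where "mat_inverse A = Some C"
    using mat_inverse(1)[OF A] by fastforce
  then show "A * minv A = 1\<^sub>m n" and "minv A * A = 1\<^sub>m n" and "minv A \<in> carrier_mat n n"
    using mat_inverse(2)[OF A] unfolding minv_def by auto
qed

lemma is_diag_eq_mat_diag:
  assumes "P \<in> carrier_mat n n" and "is_diag P"
  shows "P = mat_diag n (\<lambda>j. P $$ (j, j))"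
  using assms unfolding is_diag_def mat_diag_def by (intro eq_matI) auto

lemma minv_mat_diag:
  assumes "\<forall>j<n. p j \<noteq> 0"
  shows "minv (mat_diag n p) = mat_diag n (\<lambda>j. 1 / p j)"
proof -
  let ?A = "mat_diag n p" and ?B = "mat_diag n (\<lambda>j. 1 / p j)"
  have AB: "?A * ?B = 1\<^sub>m n" and BA: "?B * ?A = 1\<^sub>m n"
    using assms unfolding mat_diag_diag by (auto intro!: eq_matI simp: mat_diag_def)
  then have "invertible_mat ?A"
    unfolding invertible_mat_def inverts_mat_def by (metis carrier_matD mat_diag_dim square_mat.simps)
  note minv = invertible_mat_minv[OF mat_diag_dim this]
  have "minv ?A = (?B * ?A) * minv ?A"
    unfolding BA using minv(3) by simp
  also have "\<dots> = ?B * (?A * minv ?A)"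
    using minv(3) by (intro assoc_mult_mat[of _ n n _ n _ n]) auto
  also have "\<dots> = ?B"
    by (simp add: minv(1) right_mult_one_mat[OF mat_diag_dim])
  finally show ?thesis .
qed

lemma minv_is_diag:
  assumes "P \<in> carrier_mat n n" and "is_diag P" and "\<forall>j<n. P $$ (j, j) \<noteq> 0"
  shows "minv P = mat_diag n (\<lambda>j. 1 / P $$ (j, j))"
proof -
  from is_diag_eq_mat_diag[OF assms(1,2)] have "minv P = minv (mat_diag n (\<lambda>j. P $$ (j, j)))"
    by (rule arg_cong)
  also have "\<dots> = mat_diag n (\<lambda>j. 1 / P $$ (j, j))"
    by (rule minv_mat_diag[OF assms(3)])
  finally show ?thesis .
qed

lemma det_mat_diag: "det (mat_diag n p) = (\<Prod>j<n. p j)"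
proof -
  have "det (mat_diag n p) = prod_list (diag_mat (mat_diag n p))"
    by (rule det_upper_triangular[of _ n]) (auto simp: upper_triangular_def mat_diag_def)
  then show ?thesis
    by (simp add: prod_list_diag_prod atLeast0LessThan mat_diag_def)
qed

lemma update_mat_index_same: "i < dim_row A \<Longrightarrow> j < dim_col A \<Longrightarrow> (A |\<^sub>m (i, j) \<mapsto> A $$ (i, j)) = A"
  by (intro eq_matI) (auto simp: update_mat_def)

section \<open>The objective in coordinates\<close>

definition residual :: "real mat \<Rightarrow> nat \<Rightarrow> real mat \<Rightarrow> real mat \<Rightarrow> nat \<Rightarrow> nat \<Rightarrow> real" where
  "residual Y d L R i j = Y $$ (i, j) - (\<Sum>k<d. L $$ (i, k) * R $$ (j, k))"

definition fobj_diag :: "real mat \<Rightarrow> nat \<Rightarrow> real mat \<Rightarrow> real mat \<Rightarrow> (nat \<Rightarrow> real) \<Rightarrow> real" where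
  "fobj_diag Y d L R p =
     1/2 * (\<Sum>j<dim_col Y. (\<Sum>i<dim_row Y. (residual Y d L R i j)\<^sup>2) / p j)
     + real (dim_row Y) / 2 * (\<Sum>j<dim_col Y. ln (p j))"

lemma index_residual_mat:
  assumes "Y \<in> carrier_mat D N" "L \<in> carrier_mat D d" "R \<in> carrier_mat N d" "i < D" "j < N"
  shows "(Y - L * transpose_mat R) $$ (i, j) = residual Y d L R i j"
  using assms by (simp add: residual_def scalar_prod_def lessThan_atLeast0)

lemma colsq_residual:
  assumes "Y \<in> carrier_mat D N" "L \<in> carrier_mat D d" "R \<in> carrier_mat N d" "j < N"
  shows "colsq (Y - L * transpose_mat R) j = (\<Sum>i<D. (residual Y d L R i j)\<^sup>2)"
  using assms index_residual_mat[OF assms(1-3)] unfolding colsq_def by simp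

lemma fobj_diag_cong:
  assumes "Y \<in> carrier_mat D N" and "\<forall>j<N. p j = q j"
  shows "fobj_diag Y d L R p = fobj_diag Y d L R q"
  using assms unfolding fobj_diag_def by simp

lemma fobj_diag_columnwise:
  assumes "Y \<in> carrier_mat D N"
  shows "fobj_diag Y d L R p
    = (\<Sum>j<N. (\<Sum>i<D. (residual Y d L R i j)\<^sup>2) / (2 * p j) + real D / 2 * ln (p j))"
  using assms unfolding fobj_diag_def
  by (simp add: sum.distrib sum_distrib_left sum_divide_distrib[symmetric] mult.commute)

lemma fobj_eq_fobj_diag:
  assumes Y: "Y \<in> carrier_mat D N" and L: "L \<in> carrier_mat D d" and R: "R \<in> carrier_mat N d"
    and P: "P \<in> carrier_mat N N" "is_diag P" and pos: "\<forall>j<N. P $$ (j, j) > 0"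
  shows "fobj Y L R P = fobj_diag Y d L R (\<lambda>j. P $$ (j, j))"
proof -
  let ?E = "Y - L * transpose_mat R"
  have E: "?E \<in> carrier_mat D N"
    using Y L R by auto
  have "(frob (?E * mat_diag N (\<lambda>j. 1 / sqrt (P $$ (j, j)))))\<^sup>2
      = (\<Sum>i<D. \<Sum>j<N. (?E $$ (i, j) * (1 / sqrt (P $$ (j, j))))\<^sup>2)"
    unfolding mat_diag_mult_right[OF E] frob_def by (simp add: sum_nonneg)
  also have "\<dots> = (\<Sum>j<N. \<Sum>i<D. (residual Y d L R i j)\<^sup>2 / P $$ (j, j))"
    using pos index_residual_mat[OF Y L R]
    by (subst sum.swap) (auto intro!: sum.cong simp: power_mult_distrib power_divide less_imp_le)
  finally have frob: "(frob (?E * mat_diag N (\<lambda>j. 1 / sqrt (P $$ (j, j)))))\<^sup>2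
      = (\<Sum>j<N. (\<Sum>i<D. (residual Y d L R i j)\<^sup>2) / P $$ (j, j))"
    by (simp add: sum_divide_distrib)
  moreover have "ln (det P) = (\<Sum>j<N. ln (P $$ (j, j)))"
    using pos by (subst is_diag_eq_mat_diag[OF P]) (simp add: det_mat_diag, subst ln_prod, auto)
  moreover have "dim_row Y = D" "dim_col Y = N"
    using Y by auto
  ultimately show ?thesis
    unfolding fobj_def fobj_diag_def by simp
qed

lemma fobj_update_diag_eq:
  assumes Y: "Y \<in> carrier_mat D N" and L: "L \<in> carrier_mat D d" and R: "R \<in> carrier_mat N d"
    and P: "P \<in> carrier_mat N N" "is_diag P" and pos: "\<forall>j<N. P $$ (j, j) > 0"
    and j: "j < N" and x: "x > 0"
  shows "fobj Y L R (P |\<^sub>m (j, j) \<mapsto> x) = fobj_diag Y d L R ((\<lambda>j. P $$ (j, j))(j := x))"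
proof -
  let ?P = "P |\<^sub>m (j, j) \<mapsto> x"
  have diag: "?P $$ (j', j') = ((\<lambda>j. P $$ (j, j))(j := x)) j'" if "j' < N" for j'
    using P(1) that j by (cases "j' = j") auto
  have "?P \<in> carrier_mat N N"
    using P(1) by (intro carrier_matI) auto
  moreover have "is_diag ?P"
    using P unfolding is_diag_def by auto
  moreover have "\<forall>j'<N. ?P $$ (j', j') > 0"
    using diag pos x by simp
  ultimately have "fobj Y L R ?P = fobj_diag Y d L R (\<lambda>j'. ?P $$ (j', j'))"
    by (rule fobj_eq_fobj_diag[OF Y L R])
  also have "\<dots> = fobj_diag Y d L R ((\<lambda>j. P $$ (j, j))(j := x))"
    using diag by (intro fobj_diag_cong[OF Y]) simp
  finally show ?thesis .
qed

lemma fobj_diag_lower_bound: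
  assumes Y: "Y \<in> carrier_mat D N" and eps: "\<epsilon> > 0" and p: "\<forall>j<N. \<epsilon> \<le> p j"
  shows "real D / 2 * (real N * ln \<epsilon>) \<le> fobj_diag Y d L R p"
proof -
  have "0 \<le> (\<Sum>j<N. (\<Sum>i<D. (residual Y d L R i j)\<^sup>2) / p j)"
    using p eps by (intro sum_nonneg divide_nonneg_nonneg) (auto intro: order.trans[of 0 \<epsilon>])
  moreover have "ln \<epsilon> \<le> ln (p j)" if "j < N" for j
    using that p eps by (subst ln_le_cancel_iff) auto
  then have "real N * ln \<epsilon> \<le> (\<Sum>j<N. ln (p j))"
    using sum_mono[of "{..<N}" "\<lambda>_. ln \<epsilon>" "\<lambda>j. ln (p j)"] by auto
  then have "real D / 2 * (real N * ln \<epsilon>) \<le> real D / 2 * (\<Sum>j<N. ln (p j))"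
    by (rule mult_left_mono) simp
  ultimately show ?thesis
    using Y unfolding fobj_diag_def by simp
qed

lemma fobj_diag_tendsto:
  assumes Y: "Y \<in> carrier_mat D N"
    and L: "\<forall>i<D. \<forall>k<d. (\<lambda>n. Ln n $$ (i, k)) \<longlonglongrightarrow> L $$ (i, k)"
    and R: "\<forall>j<N. \<forall>k<d. (\<lambda>n. Rn n $$ (j, k)) \<longlonglongrightarrow> R $$ (j, k)"
    and p: "\<forall>j<N. (\<lambda>n. pn n j) \<longlonglongrightarrow> p j" and pos: "\<forall>j<N. p j > 0"
  shows "(\<lambda>n. fobj_diag Y d (Ln n) (Rn n) (pn n)) \<longlonglongrightarrow> fobj_diag Y d L R p"
  using Y unfolding fobj_diag_def residual_def
  by (intro tendsto_intros; use L R p pos in auto)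

section \<open>Exact block updates\<close>

lemma weighted_sum_squares_le_if_orthogonal:
  fixes e h :: "nat \<Rightarrow> nat \<Rightarrow> real"
  assumes pos: "\<forall>j<N. p j > 0" and orth: "(\<Sum>j<N. \<Sum>i<D. e i j * h i j / p j) = 0"
  shows "(\<Sum>j<N. (\<Sum>i<D. (e i j)\<^sup>2) / p j) \<le> (\<Sum>j<N. (\<Sum>i<D. (e i j + h i j)\<^sup>2) / p j)"
proof -
  have "(\<Sum>j<N. (\<Sum>i<D. (e i j)\<^sup>2) / p j)
      = (\<Sum>j<N. (\<Sum>i<D. (e i j)\<^sup>2) / p j) + 2 * (\<Sum>j<N. \<Sum>i<D. e i j * h i j / p j)"
    using orth by simp
  also have "\<dots> = (\<Sum>j<N. \<Sum>i<D. ((e i j)\<^sup>2 + 2 * (e i j * h i j)) / p j)"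
    by (simp add: sum.distrib sum_divide_distrib add_divide_distrib sum_distrib_left)
  also have "\<dots> \<le> (\<Sum>j<N. \<Sum>i<D. (e i j + h i j)\<^sup>2 / p j)"
    using pos by (intro sum_mono divide_right_mono) (auto simp: power2_eq_square algebra_simps)
  finally show ?thesis
    by (simp add: sum_divide_distrib)
qed

lemma fobj_diag_min_L:
  assumes Y: "Y \<in> carrier_mat D N" and pos: "\<forall>j<N. p j > 0"
    and normal: "\<forall>i<D. \<forall>k<d. (\<Sum>j<N. residual Y d L R i j / p j * R $$ (j, k)) = 0"
  shows "fobj_diag Y d L R p \<le> fobj_diag Y d L' R p"
proof -
  define h where "h i j = (\<Sum>k<d. (L $$ (i, k) - L' $$ (i, k)) * R $$ (j, k))" for i j
  have "(\<Sum>j<N. \<Sum>i<D. residual Y d L R i j * h i j / p j)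
      = (\<Sum>i<D. \<Sum>k<d. (L $$ (i, k) - L' $$ (i, k)) * (\<Sum>j<N. residual Y d L R i j / p j * R $$ (j, k)))"
    unfolding h_def sum_distrib_left sum_divide_distrib
    by (subst sum.swap, rule sum.cong[OF refl], subst sum.swap) (simp add: algebra_simps)
  also have "\<dots> = 0"
    using normal by simp
  finally have "(\<Sum>j<N. (\<Sum>i<D. (residual Y d L R i j)\<^sup>2) / p j)
      \<le> (\<Sum>j<N. (\<Sum>i<D. (residual Y d L R i j + h i j)\<^sup>2) / p j)"
    by (rule weighted_sum_squares_le_if_orthogonal[OF pos])
  moreover have "residual Y d L R i j + h i j = residual Y d L' R i j" for i j
    unfolding residual_def h_def by (simp add: algebra_simps sum_subtractf)
  ultimately show ?thesis
    using Y unfolding fobj_diag_def by simp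
qed

lemma fobj_diag_min_R:
  assumes Y: "Y \<in> carrier_mat D N" and pos: "\<forall>j<N. p j > 0"
    and normal: "\<forall>j<N. \<forall>k<d. (\<Sum>i<D. residual Y d L R i j * L $$ (i, k)) = 0"
  shows "fobj_diag Y d L R p \<le> fobj_diag Y d L R' p"
proof -
  define h where "h i j = (\<Sum>k<d. L $$ (i, k) * (R $$ (j, k) - R' $$ (j, k)))" for i j
  have "(\<Sum>i<D. residual Y d L R i j * h i j) = 0" if "j < N" for j
  proof -
    have "(\<Sum>i<D. residual Y d L R i j * h i j)
        = (\<Sum>k<d. (R $$ (j, k) - R' $$ (j, k)) * (\<Sum>i<D. residual Y d L R i j * L $$ (i, k)))"
      unfolding h_def sum_distrib_left by (subst sum.swap) (simp add: algebra_simps)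
    then show ?thesis
      using normal that by simp
  qed
  then have "(\<Sum>j<N. \<Sum>i<D. residual Y d L R i j * h i j / p j) = 0"
    by (simp add: sum_divide_distrib[symmetric])
  then have "(\<Sum>j<N. (\<Sum>i<D. (residual Y d L R i j)\<^sup>2) / p j)
      \<le> (\<Sum>j<N. (\<Sum>i<D. (residual Y d L R i j + h i j)\<^sup>2) / p j)"
    by (rule weighted_sum_squares_le_if_orthogonal[OF pos])
  moreover have "residual Y d L R i j + h i j = residual Y d L R' i j" for i j
    unfolding residual_def h_def by (simp add: algebra_simps sum_subtractf)
  ultimately show ?thesis
    using Y unfolding fobj_diag_def by simp
qed

lemma weighted_normal_equation:
  assumes Y: "Y \<in> carrier_mat D N" and W: "W \<in> carrier_mat N N" and R: "R \<in> carrier_mat N d"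
    and inv: "invertible_mat (transpose_mat R * W * R)"
    and L: "L = Y * W * R * minv (transpose_mat R * W * R)"
  shows "L \<in> carrier_mat D d" and "(Y - L * transpose_mat R) * W * R = 0\<^sub>m D d"
proof -
  define M where "M = transpose_mat R * W * R"
  have M: "M \<in> carrier_mat d d"
    unfolding M_def using R W by auto
  note minv = invertible_mat_minv[OF M inv[folded M_def]]
  have YWR: "Y * W * R \<in> carrier_mat D d"
    using Y W R by auto
  show Lc: "L \<in> carrier_mat D d"
    unfolding L M_def[symmetric] using YWR minv(3) by auto
  have "L * M = Y * W * R * (minv M * M)"
    unfolding L M_def[symmetric] using YWR minv(3) M by (simp add: assoc_mult_mat[of _ D d _ d _ d])
  also have "\<dots> = Y * W * R"
    using minv(2) by (simp add: right_mult_one_mat[OF YWR])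
  finally have LM: "L * M = Y * W * R" .
  have "(Y - L * transpose_mat R) * W * R = Y * W * R - L * transpose_mat R * W * R"
    using Y Lc R W by (simp add: minus_mult_distrib_mat[of _ D N])
  also have "L * transpose_mat R * W * R = L * M"
    unfolding M_def using Lc R W
    by (simp add: assoc_mult_mat[of _ D d _ N _ N] assoc_mult_mat[of _ D d _ N _ d]
        assoc_mult_mat[of _ d N _ N _ d])
  finally show "(Y - L * transpose_mat R) * W * R = 0\<^sub>m D d"
    unfolding LM using YWR by simp
qed

lemma L_update_minimizes:
  assumes Y: "Y \<in> carrier_mat D N" and R: "R \<in> carrier_mat N d" and pos: "\<forall>j<N. p j > 0"
    and inv: "invertible_mat (transpose_mat R * mat_diag N (\<lambda>j. 1 / p j) * R)"
    and L: "L = Y * mat_diag N (\<lambda>j. 1 / p j) * R * minv (transpose_mat R * mat_diag N (\<lambda>j. 1 / p j) * R)"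
  shows "L \<in> carrier_mat D d" and "fobj_diag Y d L R p \<le> fobj_diag Y d L' R p"
proof -
  let ?W = "mat_diag N (\<lambda>j. 1 / p j)"
  note normal = weighted_normal_equation[OF Y mat_diag_dim R inv L]
  show Lc: "L \<in> carrier_mat D d"
    by (fact normal(1))
  have E: "Y - L * transpose_mat R \<in> carrier_mat D N"
    using Y Lc R by auto
  have "((Y - L * transpose_mat R) * ?W * R) $$ (i, k) = (\<Sum>j<N. residual Y d L R i j / p j * R $$ (j, k))"
    if "i < D" "k < d" for i k
    using that R index_residual_mat[OF Y Lc R]
    unfolding mat_diag_mult_right[OF E] by (simp add: scalar_prod_def lessThan_atLeast0)
  with normal(2) show "fobj_diag Y d L R p \<le> fobj_diag Y d L' R p"
    by (intro fobj_diag_min_L[OF Y pos]) auto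
qed

lemma R_update_minimizes:
  assumes Y: "Y \<in> carrier_mat D N" and L: "L \<in> carrier_mat D d" and pos: "\<forall>j<N. p j > 0"
    and inv: "invertible_mat (transpose_mat L * L)"
    and R: "R = transpose_mat Y * L * minv (transpose_mat L * L)"
  shows "R \<in> carrier_mat N d" and "fobj_diag Y d L R p \<le> fobj_diag Y d L R' p"
proof -
  have Yt: "transpose_mat Y \<in> carrier_mat N D"
    using Y by auto
  have one: "transpose_mat Y * 1\<^sub>m D = transpose_mat Y" "transpose_mat L * 1\<^sub>m D = transpose_mat L"
    using Y L by auto
  \<comment> \<open>The R-update is the L-update for the transposed data with unit weights.\<close>
  note normal = weighted_normal_equation[OF Yt one_carrier_mat L, unfolded one, OF inv R]
  show Rc: "R \<in> carrier_mat N d"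
    by (fact normal(1))
  have "transpose_mat (Y - L * transpose_mat R) = transpose_mat Y - R * transpose_mat L"
    using Y L Rc by (simp add: transpose_minus transpose_mult)
  with normal(2) have "transpose_mat (Y - L * transpose_mat R) * L = 0\<^sub>m N d"
    using Yt Rc L by simp
  moreover have "(transpose_mat (Y - L * transpose_mat R) * L) $$ (j, k)
      = (\<Sum>i<D. residual Y d L R i j * L $$ (i, k))" if "j < N" "k < d" for j k
    using that Y L Rc index_residual_mat[OF Y L Rc _ \<open>j < N\<close>]
    by (simp add: scalar_prod_def lessThan_atLeast0)
  ultimately show "fobj_diag Y d L R p \<le> fobj_diag Y d L R' p"
    by (intro fobj_diag_min_R[OF Y pos]) (metis index_zero_mat(1))
qed

lemma inverse_plus_ln_min_at_clamp:
  fixes c D \<epsilon> x :: real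
  assumes c: "c \<ge> 0" and D: "D > 0" and eps: "\<epsilon> > 0" and x: "x \<ge> \<epsilon>"
  shows "c / (2 * max (c / D) \<epsilon>) + D / 2 * ln (max (c / D) \<epsilon>) \<le> c / (2 * x) + D / 2 * ln x"
proof -
  define m where "m = max (c / D) \<epsilon>"
  have m: "m > 0" and xp: "x > 0"
    using eps x unfolding m_def by auto
  have "ln (m / x) \<le> m / x - 1"
    using m xp by (intro ln_le_minus_one) auto
  then have tangent: "1 - m / x \<le> ln x - ln m"
    using m xp by (simp add: ln_div)
  have sign: "c * (x - m) \<le> D * m * (x - m)"
  proof (cases "c / D \<le> \<epsilon>")
    case True
    then have "m = \<epsilon>" and "c \<le> D * \<epsilon>"
      using D unfolding m_def by (auto simp: divide_le_eq mult.commute)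
    then show ?thesis
      using x by (intro mult_right_mono) auto
  next
    case False
    then have "D * m = c"
      using D unfolding m_def by auto
    then show ?thesis
      by simp
  qed
  have "c / (2 * m) - c / (2 * x) = c * (x - m) / (2 * m * x)"
    using m xp by (simp add: field_simps)
  also have "\<dots> \<le> D * m * (x - m) / (2 * m * x)"
    using sign m xp by (intro divide_right_mono) auto
  also have "\<dots> = D / 2 * (1 - m / x)"
    using m xp by (simp add: field_simps)
  also have "\<dots> \<le> D / 2 * (ln x - ln m)"
    using tangent D by (intro mult_left_mono) auto
  finally show ?thesis
    unfolding m_def[symmetric] by (simp add: algebra_simps)
qed

lemma Pi_update_minimizes:
  assumes Y: "Y \<in> carrier_mat D N" and L: "L \<in> carrier_mat D d" and R: "R \<in> carrier_mat N d"
    and D: "D \<ge> 1" and eps: "\<epsilon> > 0" and p: "\<forall>j<N. \<epsilon> \<le> p j"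
  shows "fobj_diag Y d L R (\<lambda>j. max (colsq (Y - L * transpose_mat R) j / real D) \<epsilon>)
    \<le> fobj_diag Y d L R p"
  unfolding fobj_diag_columnwise[OF Y]
proof (rule sum_mono)
  fix j
  assume "j \<in> {..<N}"
  moreover have "0 \<le> (\<Sum>i<D. (residual Y d L R i j)\<^sup>2)"
    by (simp add: sum_nonneg)
  ultimately show "(\<Sum>i<D. (residual Y d L R i j)\<^sup>2) / (2 * max (colsq (Y - L * transpose_mat R) j / real D) \<epsilon>)
      + real D / 2 * ln (max (colsq (Y - L * transpose_mat R) j / real D) \<epsilon>)
    \<le> (\<Sum>i<D. (residual Y d L R i j)\<^sup>2) / (2 * p j) + real D / 2 * ln (p j)"
    using p D eps colsq_residual[OF Y L R] inverse_plus_ln_min_at_clamp by simp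
qed

section \<open>Blockwise minimizers are critical points\<close>

lemma DERIV_if_id_const: "((\<lambda>x::real. if b then x else c) has_field_derivative (if b then 1 else 0)) F"
  by (cases b) (auto intro: derivative_eq_intros)

lemma DERIV_min_on_atLeast:
  fixes g :: "real \<Rightarrow> real"
  assumes deriv: "(g has_real_derivative g') (at a)" and a: "c \<le> a"
    and min: "\<forall>y\<ge>c. g a \<le> g y" and y: "c \<le> y"
  shows "0 \<le> g' * (y - a)"
proof (cases "c < a")
  case True
  have "\<forall>y. \<bar>a - y\<bar> < a - c \<longrightarrow> g a \<le> g y"
    using min by auto
  then have "g' = 0"
    using True by (intro DERIV_local_min[OF deriv, of "a - c"]) auto
  then show ?thesis
    by simp
next
  case False
  have "0 \<le> g'"
  proof (rule ccontr)
    assume "\<not> 0 \<le> g'"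
    then obtain \<delta> where "\<delta> > 0" and "\<forall>h>0. h < \<delta> \<longrightarrow> g (a + h) < g a"
      using DERIV_neg_dec_right[OF deriv] by force
    then have "g (a + \<delta> / 2) < g a"
      by simp
    moreover have "g a \<le> g (a + \<delta> / 2)"
      using min a \<open>\<delta> > 0\<close> by simp
    ultimately show False
      by simp
  qed
  then show ?thesis
    using False a y by simp
qed

lemma fobj_diag_min_L_deriv_zero:
  assumes Y: "Y \<in> carrier_mat D N" and L: "L \<in> carrier_mat D d" and pos: "\<forall>j<N. p j > 0"
    and min: "\<forall>L'. fobj_diag Y d L R p \<le> fobj_diag Y d L' R p" and i: "i < D" and k: "k < d"
  shows "((\<lambda>x. fobj_diag Y d (L |\<^sub>m (i, k) \<mapsto> x) R p) has_real_derivative 0) (at (L $$ (i, k)))"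
proof -
  have "\<exists>g. ((\<lambda>x. fobj_diag Y d (L |\<^sub>m (i, k) \<mapsto> x) R p) has_real_derivative g) (at (L $$ (i, k)))"
    using Y L pos unfolding fobj_diag_def residual_def update_mat_def
    by (simp, intro exI) (auto intro!: derivative_eq_intros DERIV_if_id_const)
  then obtain g where g: "((\<lambda>x. fobj_diag Y d (L |\<^sub>m (i, k) \<mapsto> x) R p) has_real_derivative g) (at (L $$ (i, k)))"
    by blast
  moreover have "g = 0"
    using DERIV_local_min[OF g, of 1] min update_mat_index_same[of i L k] L i k by simp
  ultimately show ?thesis
    by simp
qed

lemma fobj_diag_min_R_deriv_zero:
  assumes Y: "Y \<in> carrier_mat D N" and R: "R \<in> carrier_mat N d" and pos: "\<forall>j<N. p j > 0"
    and min: "\<forall>R'. fobj_diag Y d L R p \<le> fobj_diag Y d L R' p" and j: "j < N" and k: "k < d"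
  shows "((\<lambda>x. fobj_diag Y d L (R |\<^sub>m (j, k) \<mapsto> x) p) has_real_derivative 0) (at (R $$ (j, k)))"
proof -
  have "\<exists>g. ((\<lambda>x. fobj_diag Y d L (R |\<^sub>m (j, k) \<mapsto> x) p) has_real_derivative g) (at (R $$ (j, k)))"
    using Y R pos unfolding fobj_diag_def residual_def update_mat_def
    by (simp, intro exI) (auto intro!: derivative_eq_intros DERIV_if_id_const)
  then obtain g where g: "((\<lambda>x. fobj_diag Y d L (R |\<^sub>m (j, k) \<mapsto> x) p) has_real_derivative g) (at (R $$ (j, k)))"
    by blast
  moreover have "g = 0"
    using DERIV_local_min[OF g, of 1] min update_mat_index_same[of j R k] R j k by simp
  ultimately show ?thesis
    by simp
qed

lemma fobj_diag_min_Pi_deriv: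
  assumes Y: "Y \<in> carrier_mat D N" and pos: "\<forall>j<N. p j > 0" and p: "\<forall>j<N. \<epsilon> \<le> p j"
    and min: "\<forall>q. (\<forall>j<N. \<epsilon> \<le> q j) \<longrightarrow> fobj_diag Y d L R p \<le> fobj_diag Y d L R q" and j: "j < N"
  shows "\<exists>g. ((\<lambda>x. fobj_diag Y d L R (p(j := x))) has_real_derivative g) (at (p j))
    \<and> (\<forall>y\<ge>\<epsilon>. 0 \<le> g * (y - p j))"
proof -
  have "\<exists>g. ((\<lambda>x. fobj_diag Y d L R (p(j := x))) has_real_derivative g) (at (p j))"
    using Y pos j unfolding fobj_diag_def fun_upd_apply
    by (intro exI) (auto intro!: derivative_eq_intros DERIV_if_id_const split: if_split_asm)
  then obtain g where g: "((\<lambda>x. fobj_diag Y d L R (p(j := x))) has_real_derivative g) (at (p j))"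
    by blast
  moreover have "\<forall>y\<ge>\<epsilon>. fobj_diag Y d L R (p(j := p j)) \<le> fobj_diag Y d L R (p(j := y))"
    using min p by simp
  then have "\<forall>y\<ge>\<epsilon>. 0 \<le> g * (y - p j)"
    using DERIV_min_on_atLeast[OF g, of \<epsilon>] p j by simp
  ultimately show ?thesis
    by blast
qed

lemma fobj_min_Pi_deriv:
  assumes Y: "Y \<in> carrier_mat D N" and L: "L \<in> carrier_mat D d" and R: "R \<in> carrier_mat N d"
    and P: "P \<in> carrier_mat N N" "is_diag P"
    and pos: "\<forall>j<N. P $$ (j, j) > 0" and p: "\<forall>j<N. \<epsilon> \<le> P $$ (j, j)"
    and min: "\<forall>q. (\<forall>j<N. \<epsilon> \<le> q j) \<longrightarrow> fobj_diag Y d L R (\<lambda>j. P $$ (j, j)) \<le> fobj_diag Y d L R q"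
    and j: "j < N"
  shows "\<exists>g. ((\<lambda>x. fobj Y L R (P |\<^sub>m (j, j) \<mapsto> x)) has_real_derivative g) (at (P $$ (j, j)))
    \<and> (\<forall>y\<ge>\<epsilon>. 0 \<le> g * (y - P $$ (j, j)))"
proof -
  obtain g where g: "((\<lambda>x. fobj_diag Y d L R ((\<lambda>j. P $$ (j, j))(j := x))) has_real_derivative g) (at (P $$ (j, j)))"
    and kkt: "\<forall>y\<ge>\<epsilon>. 0 \<le> g * (y - P $$ (j, j))"
    using fobj_diag_min_Pi_deriv[OF Y pos p min j] by blast
  have "fobj_diag Y d L R ((\<lambda>j. P $$ (j, j))(j := x)) = fobj Y L R (P |\<^sub>m (j, j) \<mapsto> x)"
    if "x \<in> {0<..}" for x
    using fobj_update_diag_eq[OF Y L R P pos j] that by simp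
  then have "((\<lambda>x. fobj Y L R (P |\<^sub>m (j, j) \<mapsto> x)) has_real_derivative g) (at (P $$ (j, j)))"
    using pos j by (intro has_field_derivative_transform_within_open[OF g, of "{0<..}"]) auto
  with kkt show ?thesis
    by blast
qed

lemma critical_point_if_blockwise_min:
  assumes Y: "Y \<in> carrier_mat D N" and eps: "\<epsilon> > 0" and feas: "feasible D N d \<epsilon> L R P"
    and minL: "\<forall>L'. fobj_diag Y d L R (\<lambda>j. P $$ (j, j)) \<le> fobj_diag Y d L' R (\<lambda>j. P $$ (j, j))"
    and minR: "\<forall>R'. fobj_diag Y d L R (\<lambda>j. P $$ (j, j)) \<le> fobj_diag Y d L R' (\<lambda>j. P $$ (j, j))"
    and minPi: "\<forall>q. (\<forall>j<N. \<epsilon> \<le> q j) \<longrightarrow> fobj_diag Y d L R (\<lambda>j. P $$ (j, j)) \<le> fobj_diag Y d L R q"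
  shows "critical_point Y d \<epsilon> L R P"
proof -
  define p where "p j = P $$ (j, j)" for j
  have L: "L \<in> carrier_mat D d" and R: "R \<in> carrier_mat N d"
    and P: "P \<in> carrier_mat N N" "is_diag P" and p: "\<forall>j<N. \<epsilon> \<le> p j"
    using feas unfolding feasible_def p_def by auto
  have pos: "\<forall>j<N. p j > 0"
    using p eps by force
  note fobj = fobj_eq_fobj_diag[OF Y _ _ _ _ pos[unfolded p_def], folded p_def]
  have dL: "\<forall>i<D. \<forall>k<d. ((\<lambda>x. fobj Y (L |\<^sub>m (i, k) \<mapsto> x) R P) has_real_derivative 0) (at (L $$ (i, k)))"
  proof (intro allI impI)
    fix i k
    assume ik: "i < D" "k < d"
    have "L |\<^sub>m (i, k) \<mapsto> x \<in> carrier_mat D d" for x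
      using L by (intro carrier_matI) auto
    then have "(\<lambda>x. fobj Y (L |\<^sub>m (i, k) \<mapsto> x) R P) = (\<lambda>x. fobj_diag Y d (L |\<^sub>m (i, k) \<mapsto> x) R p)"
      using fobj[OF _ R P] by (intro ext) blast
    then show "((\<lambda>x. fobj Y (L |\<^sub>m (i, k) \<mapsto> x) R P) has_real_derivative 0) (at (L $$ (i, k)))"
      using fobj_diag_min_L_deriv_zero[OF Y L pos minL[folded p_def] ik] by simp
  qed
  have dR: "\<forall>j<N. \<forall>k<d. ((\<lambda>x. fobj Y L (R |\<^sub>m (j, k) \<mapsto> x) P) has_real_derivative 0) (at (R $$ (j, k)))"
  proof (intro allI impI)
    fix j k
    assume jk: "j < N" "k < d"
    have "R |\<^sub>m (j, k) \<mapsto> x \<in> carrier_mat N d" for x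
      using R by (intro carrier_matI) auto
    then have "(\<lambda>x. fobj Y L (R |\<^sub>m (j, k) \<mapsto> x) P) = (\<lambda>x. fobj_diag Y d L (R |\<^sub>m (j, k) \<mapsto> x) p)"
      using fobj[OF L _ P] by (intro ext) blast
    then show "((\<lambda>x. fobj Y L (R |\<^sub>m (j, k) \<mapsto> x) P) has_real_derivative 0) (at (R $$ (j, k)))"
      using fobj_diag_min_R_deriv_zero[OF Y R pos minR[folded p_def] jk] by simp
  qed
  have "\<exists>g. ((\<lambda>x. fobj Y L R (P |\<^sub>m (j, j) \<mapsto> x)) has_real_derivative g) (at (P $$ (j, j)))
      \<and> (\<forall>y\<ge>\<epsilon>. 0 \<le> g * (y - P $$ (j, j)))" if "j < N" for j
    using fobj_min_Pi_deriv[OF Y L R P pos[unfolded p_def] p[unfolded p_def] minPi that] .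
  then obtain gP
    where dPi: "\<forall>j<N. ((\<lambda>x. fobj Y L R (P |\<^sub>m (j, j) \<mapsto> x)) has_real_derivative gP j) (at (P $$ (j, j)))"
      and kkt: "\<forall>j<N. \<forall>y\<ge>\<epsilon>. 0 \<le> gP j * (y - P $$ (j, j))"
    by metis
  have "0 \<le> (\<Sum>j<N. gP j * (P' $$ (j, j) - P $$ (j, j)))" if "feasible D N d \<epsilon> L' R' P'" for L' R' P'
    using that kkt unfolding feasible_def by (intro sum_nonneg) auto
  moreover have "dim_row Y = D" "dim_col Y = N"
    using Y by auto
  ultimately show ?thesis
    unfolding critical_point_def using feas dL dR dPi
    by (intro conjI exI[of _ "\<lambda>_ _. 0"] exI[of _ gP]) auto
qed

section \<open>Limit points of alternating minimization\<close>

lemma alternating_minimization_descent: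
  fixes f :: "'a \<Rightarrow> 'b \<Rightarrow> 'c \<Rightarrow> real"
  assumes y_step: "\<And>t y z. z \<in> Z \<Longrightarrow> f (xs (Suc t)) (ys (Suc t)) z \<le> f (xs (Suc t)) y z"
    and z_step: "\<And>t z. z \<in> Z \<Longrightarrow> f (xs (Suc t)) (ys (Suc t)) (zs (Suc t)) \<le> f (xs (Suc t)) (ys (Suc t)) z"
    and zs: "\<And>t. zs t \<in> Z"
  shows "f (xs (Suc t)) (ys (Suc t)) (zs (Suc t)) \<le> f (xs (Suc t)) (ys t) (zs t)"
proof -
  have "f (xs (Suc t)) (ys (Suc t)) (zs (Suc t)) \<le> f (xs (Suc t)) (ys (Suc t)) (zs t)"
    using z_step zs .
  also have "\<dots> \<le> f (xs (Suc t)) (ys t) (zs t)"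
    using y_step zs .
  finally show ?thesis .
qed

(* The middle block is optimal for every value of the last block (the R-update does not involve \<Pi>);
   this is what makes every limit point blockwise optimal without uniqueness of block minimizers. *)
lemma alternating_minimization_limit:
  fixes f :: "'a \<Rightarrow> 'b \<Rightarrow> 'c \<Rightarrow> real"
  assumes x_step: "\<And>t x. f (xs (Suc t)) (ys t) (zs t) \<le> f x (ys t) (zs t)"
    and y_step: "\<And>t y z. z \<in> Z \<Longrightarrow> f (xs (Suc t)) (ys (Suc t)) z \<le> f (xs (Suc t)) y z"
    and z_step: "\<And>t z. z \<in> Z \<Longrightarrow> f (xs (Suc t)) (ys (Suc t)) (zs (Suc t)) \<le> f (xs (Suc t)) (ys (Suc t)) z"
    and zs: "\<And>t. zs t \<in> Z"
    and bounded: "\<And>t. b \<le> f (xs t) (ys t) (zs t)"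
    and \<phi>: "strict_mono \<phi>"
    and lim: "(\<lambda>n. f (xs (\<phi> n)) (ys (\<phi> n)) (zs (\<phi> n))) \<longlonglongrightarrow> f x y z"
    and lim_x: "\<And>x'. (\<lambda>n. f x' (ys (\<phi> n)) (zs (\<phi> n))) \<longlonglongrightarrow> f x' y z"
    and lim_y: "\<And>y'. (\<lambda>n. f (xs (\<phi> n)) y' (zs (\<phi> n))) \<longlonglongrightarrow> f x y' z"
    and lim_z: "\<And>z'. z' \<in> Z \<Longrightarrow> (\<lambda>n. f (xs (\<phi> n)) (ys (\<phi> n)) z') \<longlonglongrightarrow> f x y z'"
  shows "f x y z \<le> f x' y z" and "f x y z \<le> f x y' z" and "z' \<in> Z \<Longrightarrow> f x y z \<le> f x y z'"
proof -
  define a where "a t = f (xs t) (ys t) (zs t)" for t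
  have descent: "a (Suc t) \<le> f (xs (Suc t)) (ys t) (zs t)" for t
    unfolding a_def using alternating_minimization_descent[where f = f and xs = xs and ys = ys and zs = zs and Z = Z, OF y_step z_step zs] .
  have "decseq a"
  proof (rule decseq_SucI)
    show "a (Suc t) \<le> a t" for t
      using descent[of t] x_step[of t "xs t"] unfolding a_def by linarith
  qed
  then obtain l where "a \<longlonglongrightarrow> l" and l_le: "\<And>t. l \<le> a t"
    using decseq_convergent[of a b] bounded unfolding a_def by blast
  then have "(\<lambda>n. f (xs (\<phi> n)) (ys (\<phi> n)) (zs (\<phi> n))) \<longlonglongrightarrow> l"
    using LIMSEQ_subseq_LIMSEQ[OF _ \<phi>] unfolding a_def by (auto simp: o_def)
  with lim have l: "f x y z = l"
    by (rule LIMSEQ_unique)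
  have after_first: "\<forall>\<^sub>F n in sequentially. \<exists>s. \<phi> n = Suc s"
  proof (rule eventually_sequentiallyI)
    fix n :: nat
    assume "1 \<le> n"
    then have "\<phi> n \<noteq> 0"
      using seq_suble[OF \<phi>, of n] by linarith
    then show "\<exists>s. \<phi> n = Suc s"
      by (rule not0_implies_Suc)
  qed
  show "f x y z \<le> f x' y z"
    unfolding l
  proof (rule tendsto_lowerbound[OF lim_x])
    have "l \<le> f x' (ys t) (zs t)" for t
      using l_le[of "Suc t"] descent[of t] x_step[of t x'] by linarith
    then show "\<forall>\<^sub>F n in sequentially. l \<le> f x' (ys (\<phi> n)) (zs (\<phi> n))"
      by (intro always_eventually allI)
  qed simp
  show "f x y z \<le> f x y' z"
    unfolding l
  proof (rule tendsto_lowerbound[OF lim_y])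
    have bound: "l \<le> f (xs (Suc s)) y' (zs (Suc s))" for s
      using l_le[of "Suc s"] y_step[of "zs (Suc s)" s y', OF zs] unfolding a_def by linarith
    show "\<forall>\<^sub>F n in sequentially. l \<le> f (xs (\<phi> n)) y' (zs (\<phi> n))"
      using after_first by eventually_elim (use bound in auto)
  qed simp
  show "f x y z \<le> f x y z'" if "z' \<in> Z"
    unfolding l
  proof (rule tendsto_lowerbound[OF lim_z[OF that]])
    have bound: "l \<le> f (xs (Suc s)) (ys (Suc s)) z'" for s
      using l_le[of "Suc s"] z_step[OF that, of s] unfolding a_def by linarith
    show "\<forall>\<^sub>F n in sequentially. l \<le> f (xs (\<phi> n)) (ys (\<phi> n)) z'"
      using after_first by eventually_elim (use bound in auto)
  qed simp
qed

lemma mat_tendsto_diag_ge: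
  assumes P: "P \<in> carrier_mat N N" and lim: "mat_tendsto Ps P"
    and Ps: "\<And>t. Ps t \<in> carrier_mat N N \<and> is_diag (Ps t) \<and> (\<forall>j<N. \<epsilon> \<le> Ps t $$ (j, j))"
  shows "is_diag P" and "\<forall>j<N. \<epsilon> \<le> P $$ (j, j)"
proof -
  have entries: "(\<lambda>t. Ps t $$ (i, j)) \<longlonglongrightarrow> P $$ (i, j)" if "i < N" "j < N" for i j
    using lim P that unfolding mat_tendsto_def by auto
  show "is_diag P"
    unfolding is_diag_def
  proof (intro allI impI)
    fix i j
    assume "i < dim_row P" "j < dim_col P" "i \<noteq> j"
    then have ij: "i < N" "j < N" "i \<noteq> j"
      using P by auto
    then have "Ps t $$ (i, j) = 0" for t
      using Ps[of t] unfolding is_diag_def carrier_mat_def by auto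
    then have "(\<lambda>t. 0) \<longlonglongrightarrow> P $$ (i, j)"
      using entries[OF ij(1,2)] by simp
    from LIMSEQ_unique[OF tendsto_const this] show "P $$ (i, j) = 0"
      by (rule sym)
  qed
  show "\<forall>j<N. \<epsilon> \<le> P $$ (j, j)"
  proof (intro allI impI)
    fix j
    assume j: "j < N"
    show "\<epsilon> \<le> P $$ (j, j)"
      by (rule LIMSEQ_le_const[OF entries[OF j j]]) (use Ps j in auto)
  qed
qed

locale alternating_minimization =
  fixes Y :: "real mat" and D N d :: nat and \<epsilon> :: real and Ls Rs Ps :: "nat \<Rightarrow> real mat"
  assumes Y: "Y \<in> carrier_mat D N" and D: "D \<ge> 1" and eps: "\<epsilon> > 0"
    and feasible_0: "feasible D N d \<epsilon> (Ls 0) (Rs 0) (Ps 0)"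
    and invR: "\<And>t. invertible_mat (transpose_mat (Rs t) * minv (Ps t) * Rs t)"
    and updL: "\<And>t. Ls (Suc t) = Y * minv (Ps t) * Rs t * minv (transpose_mat (Rs t) * minv (Ps t) * Rs t)"
    and invL: "\<And>t. invertible_mat (transpose_mat (Ls (Suc t)) * Ls (Suc t))"
    and updR: "\<And>t. Rs (Suc t) = transpose_mat Y * Ls (Suc t) * minv (transpose_mat (Ls (Suc t)) * Ls (Suc t))"
    and updP: "\<And>t. Ps (Suc t) =
      mat_diag N (\<lambda>j. max (colsq (Y - Ls (Suc t) * transpose_mat (Rs (Suc t))) j / real D) \<epsilon>)"
begin

definition weights :: "nat \<Rightarrow> nat \<Rightarrow> real" where
  "weights t j = Ps t $$ (j, j)"

definition feasible_weights :: "(nat \<Rightarrow> real) set" where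
  "feasible_weights = {q. \<forall>j<N. \<epsilon> \<le> q j}"

lemma feasible_weights_pos: "q \<in> feasible_weights \<Longrightarrow> \<forall>j<N. q j > 0"
  using eps unfolding feasible_weights_def by (auto intro: less_le_trans)

lemma iterates_feasible: "feasible D N d \<epsilon> (Ls t) (Rs t) (Ps t)"
proof (induction t)
  case 0
  show ?case
    by (fact feasible_0)
next
  case (Suc t)
  then have R: "Rs t \<in> carrier_mat N d" and pos: "\<forall>j<N. weights t j > 0"
    and "minv (Ps t) = mat_diag N (\<lambda>j. 1 / weights t j)"
    using eps unfolding feasible_def weights_def by (auto intro!: minv_is_diag)
  then have L: "Ls (Suc t) \<in> carrier_mat D d"
    using L_update_minimizes(1)[OF Y R] invR updL by metis
  then have "Rs (Suc t) \<in> carrier_mat N d"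
    using R_update_minimizes(1)[OF Y L pos] invL updR by metis
  with L show ?case
    unfolding feasible_def is_diag_def updP[of t] mat_diag_def by auto
qed

lemma weights_feasible: "weights t \<in> feasible_weights"
  using iterates_feasible[of t] unfolding feasible_def weights_def feasible_weights_def by auto

lemma L_step: "fobj_diag Y d (Ls (Suc t)) (Rs t) (weights t) \<le> fobj_diag Y d L (Rs t) (weights t)"
proof -
  note pos = feasible_weights_pos[OF weights_feasible[of t]]
  have "minv (Ps t) = mat_diag N (\<lambda>j. 1 / weights t j)"
    using iterates_feasible[of t] pos unfolding feasible_def weights_def
    by (intro minv_is_diag) auto
  moreover have "Rs t \<in> carrier_mat N d"
    using iterates_feasible[of t] unfolding feasible_def by auto
  ultimately show ?thesis
    using L_update_minimizes(2)[OF Y _ pos] invR updL by metis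
qed

lemma R_step:
  assumes "q \<in> feasible_weights"
  shows "fobj_diag Y d (Ls (Suc t)) (Rs (Suc t)) q \<le> fobj_diag Y d (Ls (Suc t)) R q"
  using R_update_minimizes(2)[OF Y _ feasible_weights_pos[OF assms] invL updR] iterates_feasible[of "Suc t"]
  unfolding feasible_def by auto

lemma Pi_step:
  assumes "q \<in> feasible_weights"
  shows "fobj_diag Y d (Ls (Suc t)) (Rs (Suc t)) (weights (Suc t)) \<le> fobj_diag Y d (Ls (Suc t)) (Rs (Suc t)) q"
proof -
  have LR: "Ls (Suc t) \<in> carrier_mat D d" "Rs (Suc t) \<in> carrier_mat N d"
    using iterates_feasible[of "Suc t"] unfolding feasible_def by auto
  have "fobj_diag Y d (Ls (Suc t)) (Rs (Suc t)) (weights (Suc t))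
      = fobj_diag Y d (Ls (Suc t)) (Rs (Suc t))
          (\<lambda>j. max (colsq (Y - Ls (Suc t) * transpose_mat (Rs (Suc t))) j / real D) \<epsilon>)"
    unfolding weights_def updP[of t] by (intro fobj_diag_cong[OF Y]) (simp add: mat_diag_def)
  also have "\<dots> \<le> fobj_diag Y d (Ls (Suc t)) (Rs (Suc t)) q"
    using assms unfolding feasible_weights_def by (intro Pi_update_minimizes[OF Y LR D eps]) auto
  finally show ?thesis .
qed

lemma objective_bounded_below:
  "real D / 2 * (real N * ln \<epsilon>) \<le> fobj_diag Y d (Ls t) (Rs t) (weights t)"
  using fobj_diag_lower_bound[OF Y eps] weights_feasible unfolding feasible_weights_def by auto

lemma limit_point_feasible:
  assumes "L \<in> carrier_mat D d" and "R \<in> carrier_mat N d" and P: "P \<in> carrier_mat N N"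
    and "limit_point3 Ls Rs Ps L R P"
  shows "feasible D N d \<epsilon> L R P"
proof -
  obtain \<phi> where "mat_tendsto (Ps \<circ> \<phi>) P"
    using assms(4) unfolding limit_point3_def by blast
  moreover have "Ps (\<phi> t) \<in> carrier_mat N N \<and> is_diag (Ps (\<phi> t)) \<and> (\<forall>j<N. \<epsilon> \<le> Ps (\<phi> t) $$ (j, j))" for t
    using iterates_feasible unfolding feasible_def by auto
  ultimately show ?thesis
    using mat_tendsto_diag_ge[OF P, of "Ps \<circ> \<phi>" \<epsilon>] assms unfolding feasible_def by auto
qed

lemma limit_point_blockwise_min:
  assumes L: "L \<in> carrier_mat D d" and R: "R \<in> carrier_mat N d" and P: "P \<in> carrier_mat N N"
    and limit: "limit_point3 Ls Rs Ps L R P"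
  defines "p \<equiv> \<lambda>j. P $$ (j, j)"
  shows "fobj_diag Y d L R p \<le> fobj_diag Y d L' R p"
    and "fobj_diag Y d L R p \<le> fobj_diag Y d L R' p"
    and "q \<in> feasible_weights \<Longrightarrow> fobj_diag Y d L R p \<le> fobj_diag Y d L R q"
proof -
  obtain \<phi> where \<phi>: "strict_mono \<phi>" and limL: "mat_tendsto (Ls \<circ> \<phi>) L"
    and limR: "mat_tendsto (Rs \<circ> \<phi>) R" and limP: "mat_tendsto (Ps \<circ> \<phi>) P"
    using limit unfolding limit_point3_def by blast
  have pos: "\<forall>j<N. p j > 0"
    using limit_point_feasible[OF L R P limit] eps unfolding feasible_def p_def
    by (auto intro: less_le_trans)
  have entriesL: "\<forall>i<D. \<forall>k<d. (\<lambda>n. Ls (\<phi> n) $$ (i, k)) \<longlonglongrightarrow> L $$ (i, k)"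
    using limL L unfolding mat_tendsto_def by auto
  have entriesR: "\<forall>j<N. \<forall>k<d. (\<lambda>n. Rs (\<phi> n) $$ (j, k)) \<longlonglongrightarrow> R $$ (j, k)"
    using limR R unfolding mat_tendsto_def by auto
  have entriesP: "\<forall>j<N. (\<lambda>n. weights (\<phi> n) j) \<longlonglongrightarrow> p j"
    using limP P unfolding mat_tendsto_def weights_def p_def by auto
  have lim: "(\<lambda>n. fobj_diag Y d (Ls (\<phi> n)) (Rs (\<phi> n)) (weights (\<phi> n))) \<longlonglongrightarrow> fobj_diag Y d L R p"
    by (rule fobj_diag_tendsto[OF Y entriesL entriesR entriesP pos])
  have lim_L: "(\<lambda>n. fobj_diag Y d L' (Rs (\<phi> n)) (weights (\<phi> n))) \<longlonglongrightarrow> fobj_diag Y d L' R p" for L'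
    by (rule fobj_diag_tendsto[OF Y _ entriesR entriesP pos]) simp
  have lim_R: "(\<lambda>n. fobj_diag Y d (Ls (\<phi> n)) R' (weights (\<phi> n))) \<longlonglongrightarrow> fobj_diag Y d L R' p" for R'
    by (rule fobj_diag_tendsto[OF Y entriesL _ entriesP pos]) simp
  have lim_Pi: "(\<lambda>n. fobj_diag Y d (Ls (\<phi> n)) (Rs (\<phi> n)) q) \<longlonglongrightarrow> fobj_diag Y d L R q"
    if "q \<in> feasible_weights" for q
    using feasible_weights_pos[OF that] by (intro fobj_diag_tendsto[OF Y entriesL entriesR]) auto
  note blockwise_min = alternating_minimization_limit[where f = "fobj_diag Y d", OF L_step R_step Pi_step
      weights_feasible objective_bounded_below \<phi> lim lim_L lim_R lim_Pi]
  then show "fobj_diag Y d L R p \<le> fobj_diag Y d L' R p"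
    and "fobj_diag Y d L R p \<le> fobj_diag Y d L R' p"
    and "q \<in> feasible_weights \<Longrightarrow> fobj_diag Y d L R p \<le> fobj_diag Y d L R q"
    by blast+
qed

theorem limit_point_critical:
  assumes "L \<in> carrier_mat D d" and "R \<in> carrier_mat N d" and "P \<in> carrier_mat N N"
    and "limit_point3 Ls Rs Ps L R P"
  shows "critical_point Y d \<epsilon> L R P"
  using critical_point_if_blockwise_min[OF Y eps limit_point_feasible[OF assms]]
    limit_point_blockwise_min[OF assms] unfolding feasible_weights_def by auto

end

theorem theorem2:
  fixes Y U S V :: "real mat" and D N d :: nat and \<epsilon> :: real
    and Ls Rs Ps :: "nat \<Rightarrow> real mat"
  assumes Y: "Y \<in> carrier_mat D N" and D: "D \<ge> 1" and N: "N \<ge> 1"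
    and centered: "\<forall>i<D. (\<Sum>j<N. Y $$ (i, j)) = 0"
    and d: "d \<ge> 1" and dD: "d \<le> D" and dN: "d \<le> N"
    and eps: "\<epsilon> > 0"
    and svd: "is_svd Y U S V"
    and L0: "Ls 0 = mat D d (\<lambda>(i, k). U $$ (i, k)) * mat_diag d (\<lambda>k. sqrt (S $$ (k, k)))"
    and R0: "Rs 0 = mat N d (\<lambda>(j, k). V $$ (j, k)) * mat_diag d (\<lambda>k. sqrt (S $$ (k, k)))"
    and P0: "Ps 0 = max (Max ((\<lambda>j. colsq (Y - Ls 0 * transpose_mat (Rs 0)) j / real D) ` {..<N})) \<epsilon>
                      \<cdot>\<^sub>m 1\<^sub>m N"
    and invR: "\<forall>t. invertible_mat (transpose_mat (Rs t) * minv (Ps t) * Rs t)"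
    and updL: "\<forall>t. Ls (Suc t) = Y * minv (Ps t) * Rs t * minv (transpose_mat (Rs t) * minv (Ps t) * Rs t)"
    and invL: "\<forall>t. invertible_mat (transpose_mat (Ls (Suc t)) * Ls (Suc t))"
    and updR: "\<forall>t. Rs (Suc t) = transpose_mat Y * Ls (Suc t) * minv (transpose_mat (Ls (Suc t)) * Ls (Suc t))"
    and updP: "\<forall>t. Ps (Suc t) = mat_diag N
                 (\<lambda>j. max (colsq (Y - Ls (Suc t) * transpose_mat (Rs (Suc t))) j / real D) \<epsilon>)"
  shows "\<forall>L R P. L \<in> carrier_mat D d \<and> R \<in> carrier_mat N d \<and> P \<in> carrier_mat N N
           \<and> limit_point3 Ls Rs Ps L R P \<longrightarrow> critical_point Y d \<epsilon> L R P"
proof -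
  have "Ls 0 \<in> carrier_mat D d"
    unfolding L0 by (rule mult_carrier_mat[of _ D d]) auto
  moreover have "Rs 0 \<in> carrier_mat N d"
    unfolding R0 by (rule mult_carrier_mat[of _ N d]) auto
  ultimately have "feasible D N d \<epsilon> (Ls 0) (Rs 0) (Ps 0)"
    unfolding feasible_def is_diag_def P0 by auto
  then interpret alternating_minimization Y D N d \<epsilon> Ls Rs Ps
    using Y D eps invR updL invL updR updP by unfold_locales auto
  show ?thesis
    using limit_point_critical by blast
qed

end
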